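(* Let $\Sigma$ be a finite alphabet with $m=|\Sigma|$, and let $M=(Q,\Sigma,\delta,\vec q_0,F)$ be the deterministic finite automaton defined as follows. Fix a symbol $a_0\notin\Sigma$. The state set is $Q=P\times N\times C$ where $P=\Sigma\cup\{a_0\}$ (component $p$, the last input letter), $N=(\Sigma\cup\{\epsilon\})^{m+1}$ (component $\vec n=(n_d)_{d\in\Sigma\cup\{a_0\}}$, recording for each $d$ the letter most recently read right after $d$), and $C=\{\mathtt{WHITE},\mathtt{BLACK}\}^m$ (component $\vec c=(c_d)_{d\in\Sigma}$). The initial state is $\vec q_0=(a_0,\epsilon^{m+1},\mathtt{WHITE}^m)$ and the final states are $F=\{(p,\vec n,\vec c)\in Q:\vec c\neq\mathtt{BLACK}^m\}$. The transition $\delta((p,\vec n,\vec c),a)$ for $a\in\Sigma$ is computed by the following procedure: (1) if $n_p\neq\epsilon$ and $n_p\neq a$, then set $b\gets p$ and repeat \{$c_b\gets\mathtt{BLACK}$; $b\gets n_b$\} until $b=p$; (2) then, if $c_a=\mathtt{BLACK}$, set $\vec c\gets\mathtt{BLACK}^m$; (3) set $n_p\gets a$; (4) set $p\gets a$; the resulting $(p,\vec n,\vec c)$ is the new state. Then the language accepted by $M$ equals $L$, the language of unique Eulerian trails over $\Sigma$.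
   Context: For a word $t=t_1\cdots t_n$ over $\Sigma$ (viewed as a vertex set), $G(t)$ is the directed multigraph on $\Sigma$ with one edge $t_i\to t_{i+1}$ for each $1\le i<n$; a word $s=s_1\cdots s_k$ is an Eulerian trail of $G(t)$ if the multiset of pairs $\{(s_i,s_{i+1}):1\le i<k\}$ equals the multiset $\{(t_i,t_{i+1}):1\le i<n\}$ (trails are vertex sequences). The language $L\subseteq\Sigma^*$ consists of the empty word $\epsilon$ together with all nonempty words $t$ such that $t$ is the only Eulerian trail of $G(t)$ starting at the vertex $t_1$ (no word $s\neq t$ with $s_1=t_1$ is an Eulerian trail of $G(t)$). *)

theory Defs
  imports Main "HOL-Library.Multiset" "HOL-Library.While_Combinator"
begin

(* Alphabet Sigma = UNIV of a finite type 'a (so m = CARD('a) \<ge> 1).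
   P = Sigma \<union> {a0} is encoded as 'a option, with None = a0.
   Entries of N are in Sigma \<union> {\<epsilon>}, encoded as 'a option, with None = \<epsilon>.
   C = {WHITE,BLACK}^m is encoded as 'a \<Rightarrow> color. *)

datatype color = White | Black

type_synonym 'a dstate = "'a option \<times> ('a option \<Rightarrow> 'a option) \<times> ('a \<Rightarrow> color)"

(* Edge multiset of the graph G(t): one edge t_i -> t_{i+1} per consecutive pair *)
definition edges :: "'a list \<Rightarrow> ('a \<times> 'a) multiset" where
  "edges t = mset (zip t (tl t))"

definition Leul :: "'a list set" where
  "Leul = {t. t = [] \<or>
     (\<forall>s. s \<noteq> [] \<and> hd s = hd t \<and> edges s = edges t \<longrightarrow> s = t)}"

(* Loop variable b : 'a option option; Some x is the element x of P,
   None marks that the procedure got stuck (b became \<epsilon>, or c_{a0} was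
   requested), which is treated as non-termination. *)
definition loop_body ::
  "('a option \<Rightarrow> 'a option) \<Rightarrow> 'a option option \<times> ('a \<Rightarrow> color)
     \<Rightarrow> 'a option option \<times> ('a \<Rightarrow> color)" where
  "loop_body n = (\<lambda>(bo, c). case bo of
      Some (Some d) \<Rightarrow> (map_option Some (n (Some d)), c(d := Black))
    | _ \<Rightarrow> (None, c))"

(* transition function; None = the procedure does not terminate *)
definition delta :: "'a dstate \<Rightarrow> 'a \<Rightarrow> 'a dstate option" where
  "delta q a = (case q of (p, n, c) \<Rightarrow>
     let c1o = (if n p \<noteq> None \<and> n p \<noteq> Some a
                then map_option snd
                       (while_option (\<lambda>(b, _). b \<noteq> Some p) (loop_body n)
                          (loop_body n (Some p, c)))
                else Some c)
     in map_option (\<lambda>c1. let c2 = (if c1 a = Black then (\<lambda>_. Black) else c1)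
                          in (Some a, n(p := Some a), c2)) c1o)"

definition q0 :: "'a dstate" where
  "q0 = (None, (\<lambda>_. None), (\<lambda>_. White))"

definition final :: "'a dstate \<Rightarrow> bool" where
  "final q = (snd (snd q) \<noteq> (\<lambda>_. Black))"

fun run_from :: "'a dstate \<Rightarrow> 'a list \<Rightarrow> 'a dstate option" where
  "run_from q [] = Some q"
| "run_from q (a # w) = Option.bind (delta q a) (\<lambda>q'. run_from q' w)"

definition accepts :: "'a list \<Rightarrow> bool" where
  "accepts w = (\<exists>q. run_from q0 w = Some q \<and> final q)"

end

theory Submission
  imports Defs "HOL-Library.Sublist"
begin

(* Call t swappable if it leaves some vertex t_i = t_j (i < j) along two different edges and a
   vertex t_l of the closed walk t_i ... t_j is visited again at a time k > j.  Exchanging the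
   walks t_i ... t_l and t_j ... t_k then gives a second trail with the edges of t and the same
   start.  Conversely, let two such trails first part at a vertex v, one continuing with y, the
   other (t) with z.  If t is not swappable, no letter of t up to its later visit of v, where it
   takes the edge (v, y), occurs again afterwards, so no edge of G(t) enters this set of letters
   from outside.  The other trail leaves the set with its second letter y and can never come
   back to v to use the edge (v, z).  Hence L consists of the words that are not swappable.

   The automaton keeps the last letter p, the successor n_d of the last non-final occurrence of
   each letter d, and colours black the letters of all closed walks t_i ... t_j with distinct
   exits (all letters, once t is swappable).  Reading a letter a different from n_p creates new
   such walks ending at the current position; following n from n_p back to p visits enough of
   their letters that, together with the old black letters, they are all black. *)

lemma in_edges_iff:
  "(a, b) \<in># edges t \<longleftrightarrow> (\<exists>q. Suc q < length t \<and> t ! q = a \<and> t ! Suc q = b)"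
  by (auto simp: edges_def set_zip nth_tl less_diff_conv)

lemma edges_Cons_Cons [simp]: "edges (x # y # r) = add_mset (x, y) (edges (y # r))"
  by (simp add: edges_def)

lemma size_edges: "size (edges t) = length t - 1"
  by (simp add: edges_def)

lemma edges_append_Cons: "edges (xs @ y # ys) = edges (xs @ [y]) + edges (y # ys)"
  by (induction xs rule: induct_list012) (auto simp: edges_def)

definition glue :: "'a list \<Rightarrow> 'a list \<Rightarrow> 'a list" where
  "glue xs ys = xs @ tl ys"

lemma glue_ne [simp]: "xs \<noteq> [] \<Longrightarrow> glue xs ys \<noteq> []"
  by (simp add: glue_def)

lemma hd_glue [simp]: "xs \<noteq> [] \<Longrightarrow> hd (glue xs ys) = hd xs"
  by (simp add: glue_def)

lemma last_glue [simp]: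
  "xs \<noteq> [] \<Longrightarrow> ys \<noteq> [] \<Longrightarrow> last xs = hd ys \<Longrightarrow> last (glue xs ys) = last ys"
  by (cases ys) (auto simp: glue_def)

lemma edges_glue [simp]:
  assumes "xs \<noteq> []" "last xs = hd ys"
  shows "edges (glue xs ys) = edges xs + edges ys"
proof (cases ys)
  case Nil
  then show ?thesis by (simp add: glue_def edges_def)
next
  case (Cons y ys')
  obtain xs' where "xs = xs' @ [y]"
    using assms Cons by (cases xs rule: rev_cases) auto
  then show ?thesis
    using Cons edges_append_Cons[of xs' y ys'] by (simp add: glue_def)
qed

definition segment :: "'a list \<Rightarrow> nat \<Rightarrow> nat \<Rightarrow> 'a list" where
  "segment t a b = take (Suc b - a) (drop a t)"

context
  fixes t :: "'a list" and a b :: nat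
  assumes le: "a \<le> b" and lt: "b < length t"
begin

lemma segment_ne [simp]: "segment t a b \<noteq> []"
  using le lt by (simp add: segment_def)

lemma length_segment [simp]: "length (segment t a b) = Suc b - a"
  using le lt by (simp add: segment_def)

lemma nth_segment [simp]: "m \<le> b - a \<Longrightarrow> segment t a b ! m = t ! (a + m)"
  using le lt by (simp add: segment_def)

lemma hd_segment [simp]: "hd (segment t a b) = t ! a"
  by (simp add: hd_conv_nth)

lemma last_segment [simp]: "last (segment t a b) = t ! b"
  using le by (simp add: last_conv_nth)

end

lemma glue_segment:
  assumes "a \<le> b" "b \<le> c" "c < length t"
  shows "glue (segment t a b) (segment t b c) = segment t a c"
proof -
  have "drop (Suc b - a) (drop a t) = drop b (tl t)"
    using assms by (simp add: drop_Suc)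
  then have "segment t a c = take (Suc b - a) (drop a t) @ take (c - b) (drop b (tl t))"
    using assms take_add[of "Suc b - a" "c - b" "drop a t"] by (simp add: segment_def)
  then show ?thesis
    using assms by (simp add: glue_def segment_def tl_take drop_tl)
qed

definition diverges :: "'a list \<Rightarrow> nat \<Rightarrow> nat \<Rightarrow> bool" where
  "diverges t i j \<longleftrightarrow> i < j \<and> Suc j < length t \<and> t ! i = t ! j \<and> t ! Suc i \<noteq> t ! Suc j"

definition swappable :: "'a list \<Rightarrow> bool" where
  "swappable t \<longleftrightarrow>
     (\<exists>i j l k. diverges t i j \<and> i \<le> l \<and> l \<le> j \<and> j < k \<and> k < length t \<and> t ! k = t ! l)"

definition black_letters :: "'a list \<Rightarrow> 'a set" where
  "black_letters t = {t ! l | i j l. diverges t i j \<and> i \<le> l \<and> l \<le> j}"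

lemma swappableI:
  "diverges t i j \<Longrightarrow> i \<le> l \<Longrightarrow> l \<le> j \<Longrightarrow> j < k \<Longrightarrow> k < length t \<Longrightarrow> t ! k = t ! l
    \<Longrightarrow> swappable t"
  unfolding swappable_def by blast

lemma swappable_Nil [simp]: "\<not> swappable []"
  by (simp add: swappable_def)

lemma black_letters_Nil [simp]: "black_letters [] = {}"
  by (simp add: black_letters_def diverges_def)

lemma black_lettersI: "diverges t i j \<Longrightarrow> i \<le> l \<Longrightarrow> l \<le> j \<Longrightarrow> t ! l \<in> black_letters t"
  unfolding black_letters_def by blast

lemma black_lettersE:
  assumes "d \<in> black_letters t"
  obtains i j l where "diverges t i j" "i \<le> l" "l \<le> j" "d = t ! l"
  using assms unfolding black_letters_def by blast

lemma diverges_append: "diverges t i j \<Longrightarrow> diverges (t @ u) i j"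
  by (auto simp: diverges_def nth_append)

lemma diverges_prepend: "diverges t i j \<Longrightarrow> diverges (u @ t) (length u + i) (length u + j)"
  by (auto simp: diverges_def nth_append)

lemma swappable_append:
  assumes "swappable t"
  shows "swappable (t @ u)"
proof -
  obtain i j l k where "diverges t i j" "i \<le> l" "l \<le> j" "j < k" "k < length t" "t ! k = t ! l"
    using assms unfolding swappable_def by blast
  then show ?thesis
    using swappableI[OF diverges_append[of t i j u], of l k] by (simp add: nth_append)
qed

lemma swappable_prepend:
  assumes "swappable t"
  shows "swappable (u @ t)"
proof -
  obtain i j l k where "diverges t i j" "i \<le> l" "l \<le> j" "j < k" "k < length t" "t ! k = t ! l"
    using assms unfolding swappable_def by blast
  then show ?thesis
    using swappableI[OF diverges_prepend[of t i j u], of "length u + l" "length u + k"] by simp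
qed

definition exchange :: "'a list \<Rightarrow> nat \<Rightarrow> nat \<Rightarrow> nat \<Rightarrow> nat \<Rightarrow> 'a list" where
  "exchange t i l j k =
     glue (glue (glue (glue (segment t 0 i) (segment t j k)) (segment t l j)) (segment t i l))
       (segment t k (length t - 1))"

context
  fixes t :: "'a list" and i l j k :: nat
  assumes order: "i \<le> l" "l \<le> j" "j \<le> k" "k < length t"
    and ends: "t ! i = t ! j" "t ! k = t ! l"
begin

lemma edges_exchange: "edges (exchange t i l j k) = edges t"
proof -
  let ?A = "segment t 0 i" and ?B = "segment t j k" and ?C = "segment t l j"
    and ?D = "segment t i l" and ?E = "segment t k (length t - 1)"
  have "glue (glue (glue (glue ?A ?D) ?C) ?B) ?E = segment t 0 (length t - 1)"
    using order by (simp add: glue_segment)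
  also have "\<dots> = t"
    by (simp add: segment_def)
  finally have t: "glue (glue (glue (glue ?A ?D) ?C) ?B) ?E = t" .
  have "edges (glue (glue (glue (glue ?A ?D) ?C) ?B) ?E)
      = edges ?A + edges ?D + edges ?C + edges ?B + edges ?E"
    using order ends by simp
  then have "edges t = edges ?A + edges ?D + edges ?C + edges ?B + edges ?E"
    unfolding t .
  moreover have "edges (exchange t i l j k) = edges ?A + edges ?B + edges ?C + edges ?D + edges ?E"
    using order ends by (simp add: exchange_def)
  ultimately show ?thesis
    by (simp add: ac_simps)
qed

lemma hd_exchange: "hd (exchange t i l j k) = hd t"
proof -
  have "t \<noteq> []"
    using order(4) by auto
  then show ?thesis
    using order by (simp add: exchange_def hd_conv_nth[of t])
qed

lemma exchange_ne: "exchange t i l j k \<noteq> []"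
  using order by (simp add: exchange_def)

lemma nth_Suc_exchange: "j < k \<Longrightarrow> exchange t i l j k ! Suc i = t ! Suc j"
proof -
  assume "j < k"
  then obtain b bs where b: "tl (segment t j k) = b # bs"
    using order by (cases "tl (segment t j k)") (simp_all flip: length_0_conv)
  then have "exchange t i l j k ! Suc i = b"
    using order by (simp add: exchange_def glue_def nth_append)
  also have "\<dots> = t ! Suc j"
    using b order \<open>j < k\<close> nth_tl[of 0 "segment t j k"] nth_segment[of j k t 1] by simp
  finally show ?thesis .
qed

end

lemma swappable_not_in_Leul:
  assumes "swappable t"
  shows "t \<notin> Leul"
proof -
  obtain i j l k where ij: "i < j" "Suc j < length t" "t ! i = t ! j" "t ! Suc i \<noteq> t ! Suc j"
    and lk: "i \<le> l" "l \<le> j" "j < k" "k < length t" "t ! k = t ! l"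
    using assms unfolding swappable_def diverges_def by blast
  define s where "s = exchange t i l j k"
  have "s ! Suc i \<noteq> t ! Suc i"
    using ij lk by (simp add: s_def nth_Suc_exchange)
  moreover have "s \<noteq> []" "hd s = hd t" "edges s = edges t"
    using ij lk by (simp_all add: s_def exchange_ne hd_exchange edges_exchange)
  ultimately show ?thesis
    using lk unfolding Leul_def by fastforce
qed

lemma walk_avoids_closed_set:
  assumes "\<And>a b. (a, b) \<in># edges u \<Longrightarrow> b \<in> C \<Longrightarrow> a \<in> C" and "hd u \<notin> C"
  shows "set u \<inter> C = {}"
  using assms
proof (induction u rule: induct_list012)
  case (3 x y r)
  have "(x, y) \<in># edges (x # y # r)"
    by simp
  then have "y \<notin> C"
    using "3.prems" by auto
  moreover have "set (y # r) \<inter> C = {}"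
    using "3.prems"(1) \<open>y \<notin> C\<close> by (intro "3.IH"(2)) auto
  ultimately show ?case
    using "3.prems"(2) by auto
qed auto

lemma edge_into_unrevisited_prefix:
  assumes unrevisited: "\<And>k. j < k \<Longrightarrow> k < length t \<Longrightarrow> t ! k \<notin> set (take (Suc j) t)"
    and "(a, b) \<in># edges t" "b \<in> set (take (Suc j) t)"
  shows "a \<in> set (take (Suc j) t)"
proof -
  obtain q where q: "Suc q < length t" "t ! q = a" "t ! Suc q = b"
    using assms(2) by (auto simp: in_edges_iff)
  then have "q < Suc j"
    using unrevisited[of "Suc q"] assms(3) by (cases "j < Suc q") auto
  then show ?thesis
    using q(1,2) unfolding in_set_conv_nth by (intro exI[of _ q]) auto
qed

lemma swappable_if_departures_differ:
  assumes eq: "edges (v # y # ys) = edges (v # z # zs)" and "y \<noteq> z"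
  shows "swappable (v # z # zs)"
proof (rule ccontr)
  define t where "t = v # z # zs"
  assume "\<not> swappable (v # z # zs)"
  then have nsw: "\<not> swappable t"
    by (simp add: t_def)
  have "(v, y) \<in># edges (v # y # ys)"
    by simp
  then obtain j where j: "Suc j < length t" "t ! j = v" "t ! Suc j = y"
    unfolding eq in_edges_iff t_def by blast
  have "diverges t 0 j"
    using j \<open>y \<noteq> z\<close> by (cases j) (auto simp: diverges_def t_def)
  define C where "C = set (take (Suc j) t)"
  have unrevisited: "t ! k \<notin> C" if "j < k" "k < length t" for k
  proof
    assume "t ! k \<in> C"
    then obtain l where "l \<le> j" "t ! l = t ! k"
      using j(1) by (auto simp: C_def in_set_conv_nth less_Suc_eq_le)
    then show False
      using nsw swappableI[OF \<open>diverges t 0 j\<close>] that by fastforce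
  qed
  have "set (y # ys) \<inter> C = {}"
  proof (rule walk_avoids_closed_set)
    show "hd (y # ys) \<notin> C"
      using unrevisited[of "Suc j"] j by simp
    show "a \<in> C" if "(a, b) \<in># edges (y # ys)" "b \<in> C" for a b
    proof -
      have "(a, b) \<in># edges t"
        using that(1) unfolding t_def eq[symmetric] by simp
      then show ?thesis
        using edge_into_unrevisited_prefix[of j t a b] unrevisited that(2) by (simp add: C_def)
    qed
  qed
  moreover have "(v, z) \<in># edges (v # y # ys)"
    unfolding eq by simp
  then have "(v, z) \<in># edges (y # ys)"
    using \<open>y \<noteq> z\<close> by simp
  then have "v \<in> set (y # ys)"
    unfolding in_edges_iff by (metis Suc_lessD nth_mem)
  moreover have "v \<in> C"
    by (simp add: C_def t_def)
  ultimately show False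
    by blast
qed

lemma not_swappable_in_Leul:
  assumes "\<not> swappable t"
  shows "t \<in> Leul"
  unfolding Leul_def
proof (clarsimp, rule ccontr)
  fix s assume s: "s \<noteq> []" "hd s = hd t" "edges s = edges t" "s \<noteq> t"
  assume "t \<noteq> []"
  have "length s - 1 = length t - 1"
    using s(3) by (metis size_edges)
  then have "length s = length t"
    using s(1) \<open>t \<noteq> []\<close> by (metis Suc_pred' length_greater_0_conv)
  then have "s \<parallel> t"
    using s(4) by (simp add: not_equal_is_parallel)
  then obtain X b bs c cs where d: "s = X @ b # bs" "t = X @ c # cs" "b \<noteq> c"
    using parallel_decomp by blast
  then obtain Y v where X: "X = Y @ [v]"
    using s(2) by (cases X rule: rev_cases) auto
  have "edges (Y @ [v]) + edges (v # b # bs) = edges (Y @ [v]) + edges (v # c # cs)"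
    using s(3) d X edges_append_Cons[of Y v "b # bs"] edges_append_Cons[of Y v "c # cs"] by simp
  then have "swappable (v # c # cs)"
    using d(3) by (simp add: swappable_if_departures_differ)
  then show False
    using assms swappable_prepend[of _ Y] d X by simp
qed

lemma not_swappable_same_exit:
  assumes "\<not> swappable t" "i < i'" "Suc i' < length t" "t ! i = last t" "t ! i' = last t"
  shows "t ! Suc i = t ! Suc i'"
proof (rule ccontr)
  have "t \<noteq> []"
    using assms(3) by auto
  then have last: "t ! (length t - 1) = t ! i"
    using assms(4) by (simp add: last_conv_nth)
  assume "t ! Suc i \<noteq> t ! Suc i'"
  then have "diverges t i i'"
    using assms by (simp add: diverges_def)
  with last have "swappable t"
    using assms(2,3) by (intro swappableI[of t i i' i "length t - 1"]) auto
  then show False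
    using assms(1) by simp
qed

lemma last_not_in_black_letters:
  assumes "\<not> swappable t" "t \<noteq> []"
  shows "last t \<notin> black_letters t"
proof
  assume "last t \<in> black_letters t"
  then obtain i j l where "diverges t i j" "i \<le> l" "l \<le> j" "last t = t ! l"
    by (rule black_lettersE)
  moreover have "t ! (length t - 1) = last t"
    using assms(2) by (simp add: last_conv_nth)
  ultimately have "swappable t"
    by (intro swappableI[of t i j l "length t - 1"]) (auto simp: diverges_def)
  then show False
    using assms(1) by simp
qed

definition new_black_letters :: "'a list \<Rightarrow> 'a \<Rightarrow> 'a set" where
  "new_black_letters t a =
     {t ! l | i l. Suc i < length t \<and> t ! i = last t \<and> t ! Suc i \<noteq> a \<and> i \<le> l \<and> l < length t}"

lemma diverges_snoc_iff:
  "diverges (t @ [a]) i j \<longleftrightarrow>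
     diverges t i j \<or> (Suc j = length t \<and> i < j \<and> t ! i = last t \<and> t ! Suc i \<noteq> a)"
proof (cases "Suc j < length t")
  case True
  then show ?thesis
    by (auto simp: diverges_def nth_append)
next
  case False
  show ?thesis
  proof (cases "Suc j = length t")
    case True
    then have "last t = t ! j"
      by (metis diff_Suc_1 last_conv_nth list.size(3) nat.distinct(1))
    then show ?thesis
      using True by (auto simp: diverges_def nth_append)
  qed (use False in \<open>auto simp: diverges_def\<close>)
qed

lemma black_letters_snoc:
  "black_letters (t @ [a]) = black_letters t \<union> new_black_letters t a"
proof (intro equalityI subsetI)
  fix d assume "d \<in> black_letters (t @ [a])"
  then obtain i j l where ij: "diverges (t @ [a]) i j" "i \<le> l" "l \<le> j" "d = (t @ [a]) ! l"
    by (rule black_lettersE)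
  then have "j < length t" "d = t ! l"
    by (auto simp: diverges_def nth_append)
  from ij(1) consider "diverges t i j" | "Suc j = length t" "i < j" "t ! i = last t" "t ! Suc i \<noteq> a"
    by (auto simp: diverges_snoc_iff)
  then show "d \<in> black_letters t \<union> new_black_letters t a"
  proof cases
    case 1
    then show ?thesis
      using ij(2,3) \<open>d = t ! l\<close> by (simp add: black_lettersI)
  next
    case 2
    then show ?thesis
      using ij \<open>d = t ! l\<close> unfolding new_black_letters_def
      by (intro UnI2 CollectI exI[of _ i] exI[of _ l]) auto
  qed
next
  fix d assume "d \<in> black_letters t \<union> new_black_letters t a"
  then show "d \<in> black_letters (t @ [a])"
  proof
    assume "d \<in> black_letters t"
    then obtain i j l where "diverges t i j" "i \<le> l" "l \<le> j" "d = t ! l"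
      by (rule black_lettersE)
    then show ?thesis
      using black_lettersI[OF diverges_append[of t i j "[a]"]] by (simp add: diverges_def nth_append)
  next
    assume "d \<in> new_black_letters t a"
    then obtain i l where il: "Suc i < length t" "t ! i = last t" "t ! Suc i \<noteq> a" "i \<le> l"
      "l < length t" "d = t ! l"
      unfolding new_black_letters_def by blast
    then have "diverges (t @ [a]) i (length t - 1)"
      by (auto simp: diverges_snoc_iff)
    then show ?thesis
      using black_lettersI[of "t @ [a]" i "length t - 1" l] il by (simp add: nth_append)
  qed
qed

lemma swappable_snoc:
  "swappable (t @ [a]) \<longleftrightarrow> swappable t \<or> a \<in> black_letters (t @ [a])"
proof
  assume "swappable (t @ [a])"
  then obtain i j l k where ij: "diverges (t @ [a]) i j" "i \<le> l" "l \<le> j"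
    and k: "j < k" "k < Suc (length t)" "(t @ [a]) ! k = (t @ [a]) ! l"
    unfolding swappable_def by auto
  show "swappable t \<or> a \<in> black_letters (t @ [a])"
  proof (cases "k = length t")
    case True
    then have "a = (t @ [a]) ! l"
      using k by simp
    then show ?thesis
      using black_lettersI[OF ij] by simp
  next
    case False
    then have "diverges t i j" "(t @ [a]) ! k = t ! k" "(t @ [a]) ! l = t ! l"
      using ij k by (auto simp: diverges_snoc_iff nth_append)
    then show ?thesis
      using swappableI[of t i j l k] ij k False by simp
  qed
next
  assume "swappable t \<or> a \<in> black_letters (t @ [a])"
  then show "swappable (t @ [a])"
  proof
    assume "a \<in> black_letters (t @ [a])"
    then obtain i j l where "diverges (t @ [a]) i j" "i \<le> l" "l \<le> j" "a = (t @ [a]) ! l"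
      by (rule black_lettersE)
    then show ?thesis
      by (intro swappableI[of "t @ [a]" i j l "length t"]) (auto simp: diverges_def)
  qed (rule swappable_append)
qed

definition pn_state :: "'a list \<Rightarrow> 'a option \<times> ('a option \<Rightarrow> 'a option)" where
  "pn_state t = fold (\<lambda>a (p, n). (Some a, n(p := Some a))) t (None, \<lambda>_. None)"

lemma pn_state_Nil [simp]: "pn_state [] = (None, \<lambda>_. None)"
  by (simp add: pn_state_def)

lemma pn_state_snoc [simp]:
  "pn_state (t @ [a]) = (Some a, (snd (pn_state t))(fst (pn_state t) := Some a))"
  by (simp add: pn_state_def split: prod.splits)

lemma fst_pn_state: "fst (pn_state t) = (if t = [] then None else Some (last t))"
  by (induction t rule: rev_induct) auto

lemma pn_state_succ_defined:
  "Suc i < length t \<Longrightarrow> snd (pn_state t) (Some (t ! i)) \<noteq> None"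
proof (induction t rule: rev_induct)
  case (snoc a t)
  show ?case
  proof (cases "Suc i < length t")
    case True
    then show ?thesis
      using snoc by (auto simp: nth_append)
  next
    case False
    then have "i = length t - 1" "t \<noteq> []"
      using snoc.prems by auto
    then show ?thesis
      by (simp add: fst_pn_state nth_append last_conv_nth)
  qed
qed simp

lemma pn_state_succ_last_occurrence:
  assumes "snd (pn_state t) (Some d) = Some x"
  obtains i where "Suc i < length t" "t ! i = d" "t ! Suc i = x"
    "\<And>j. i < j \<Longrightarrow> Suc j < length t \<Longrightarrow> t ! j \<noteq> d"
  using assms
proof (induction t arbitrary: thesis rule: rev_induct)
  case (snoc a t)
  show ?case
  proof (cases "t \<noteq> [] \<and> last t = d")
    case True
    then show ?thesis
      using snoc.prems by (intro snoc.prems(1)[of "length t - 1"])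
        (auto simp: fst_pn_state nth_append last_conv_nth)
  next
    case not_last: False
    then have "snd (pn_state t) (Some d) = Some x"
      using snoc.prems(2) by (auto simp: fst_pn_state split: if_splits)
    then obtain i where i: "Suc i < length t" "t ! i = d" "t ! Suc i = x"
      "\<And>j. i < j \<Longrightarrow> Suc j < length t \<Longrightarrow> t ! j \<noteq> d"
      using snoc.IH by blast
    show ?thesis
    proof (rule snoc.prems(1)[of i])
      fix j assume j: "i < j" "Suc j < length (t @ [a])"
      show "(t @ [a]) ! j \<noteq> d"
      proof (cases "Suc j < length t")
        case True
        then show ?thesis
          using i j by (simp add: nth_append)
      next
        case False
        then have "j = length t - 1" "t \<noteq> []"
          using j by auto
        then show ?thesis
          using not_last by (simp add: nth_append last_conv_nth)
      qed
    qed (use i in \<open>auto simp: nth_append\<close>)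
  qed
qed simp

lemma pn_state_succ_after:
  assumes "Suc q < length t"
  obtains i where "q \<le> i" "Suc i < length t" "t ! i = t ! q"
    "snd (pn_state t) (Some (t ! q)) = Some (t ! Suc i)"
    "\<And>j. i < j \<Longrightarrow> Suc j < length t \<Longrightarrow> t ! j \<noteq> t ! q"
proof -
  obtain y where y: "snd (pn_state t) (Some (t ! q)) = Some y"
    using pn_state_succ_defined[OF assms] by auto
  then obtain i where i: "Suc i < length t" "t ! i = t ! q" "t ! Suc i = y"
    "\<And>j. i < j \<Longrightarrow> Suc j < length t \<Longrightarrow> t ! j \<noteq> t ! q"
    using pn_state_succ_last_occurrence[OF y] by blast
  moreover have "q \<le> i"
    using i(4)[of q] assms by (metis not_le)
  ultimately show ?thesis
    using y by (intro that[of i]) auto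
qed

(* Termination of the loop: the successor of a letter is read after its last non-final
   occurrence, so following n moves strictly rightwards in t until it reaches the final
   letter p. *)
lemma loop_follows_successors:
  fixes t :: "'a list"
  defines "n \<equiv> snd (pn_state t)"
  assumes last: "last t = p" and no_p: "\<And>j. q \<le> j \<Longrightarrow> Suc j < length t \<Longrightarrow> t ! j \<noteq> p"
    and q: "q < length t"
  shows "\<exists>S. while_option (\<lambda>(b, _). b \<noteq> Some (Some p)) (loop_body n) (Some (Some (t ! q)), c)
              = Some (Some (Some p), \<lambda>d. if d \<in> S then Black else c d)
           \<and> t ! q \<in> insert p S \<and> (\<forall>d\<in>insert p S. \<exists>l. q \<le> l \<and> l < length t \<and> t ! l = d)
           \<and> (\<forall>d\<in>S. \<exists>y\<in>insert p S. n (Some d) = Some y)"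
  using no_p q
proof (induction "length t - q" arbitrary: q c rule: less_induct)
  case less
  show ?case
  proof (cases "Suc q = length t")
    case True
    then have "t ! q = p"
      using last by (metis diff_Suc_1 last_conv_nth list.size(3) nat.distinct(1))
    then show ?thesis
      using less.prems(2)
      by (intro exI[of _ "{}"]) (auto simp: while_option_unfold[of _ _ "(Some (Some p), c)"])
  next
    case False
    then have "Suc q < length t"
      using less.prems(2) by simp
    then obtain i where i: "q \<le> i" "Suc i < length t" "n (Some (t ! q)) = Some (t ! Suc i)"
      unfolding n_def using pn_state_succ_after by blast
    have "t ! q \<noteq> p"
      using less.prems(1)[of q] \<open>Suc q < length t\<close> by simp
    have IH_prems: "length t - Suc i < length t - q"
      "\<And>j. Suc i \<le> j \<Longrightarrow> Suc j < length t \<Longrightarrow> t ! j \<noteq> p"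
      using i less.prems(1) by auto
    obtain S where S: "while_option (\<lambda>(b, _). b \<noteq> Some (Some p)) (loop_body n)
          (Some (Some (t ! Suc i)), c(t ! q := Black))
        = Some (Some (Some p), \<lambda>d. if d \<in> S then Black else (c(t ! q := Black)) d)"
      "t ! Suc i \<in> insert p S" "\<forall>d\<in>insert p S. \<exists>l. Suc i \<le> l \<and> l < length t \<and> t ! l = d"
      "\<forall>d\<in>S. \<exists>y\<in>insert p S. n (Some d) = Some y"
      using less.hyps[of "Suc i" "c(t ! q := Black)", OF IH_prems i(2)] by blast
    have "while_option (\<lambda>(b, _). b \<noteq> Some (Some p)) (loop_body n) (Some (Some (t ! q)), c)
        = while_option (\<lambda>(b, _). b \<noteq> Some (Some p)) (loop_body n)
            (Some (Some (t ! Suc i)), c(t ! q := Black))"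
      using \<open>t ! q \<noteq> p\<close> i(3) by (subst while_option_unfold) (simp add: loop_body_def)
    also have "(\<lambda>d. if d \<in> S then Black else (c(t ! q := Black)) d)
        = (\<lambda>d. if d \<in> insert (t ! q) S then Black else c d)"
      by auto
    moreover have "\<forall>d\<in>insert p S. \<exists>l. q \<le> l \<and> l < length t \<and> t ! l = d"
      using S(3) i(1) by (meson Suc_leD order_trans)
    ultimately show ?thesis
      using S(1,2,4) i(3) \<open>Suc q < length t\<close>
      by (intro exI[of _ "insert (t ! q) S"]) auto
  qed
qed

lemma closed_letters_absorb_suffix:
  assumes closed: "\<And>d y. d \<in> D \<Longrightarrow> snd (pn_state t) (Some d) = Some y \<Longrightarrow> y \<in> D"
  shows "t ! q \<in> D \<Longrightarrow> q \<le> l \<Longrightarrow> l < length t \<Longrightarrow> t ! l \<in> black_letters t \<union> D"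
proof (induction "length t - q" arbitrary: q rule: less_induct)
  case less
  show ?case
  proof (cases "l = q")
    case False
    then have "q < l" "Suc q < length t"
      using less.prems by auto
    then obtain i where i: "q \<le> i" "Suc i < length t" "t ! i = t ! q"
      "snd (pn_state t) (Some (t ! q)) = Some (t ! Suc i)"
      using pn_state_succ_after by blast
    then have "t ! Suc i \<in> D"
      using closed less.prems(1) by blast
    show ?thesis
    proof (cases "t ! Suc q = t ! Suc i")
      case True
      then show ?thesis
        using less.hyps[of "Suc q"] less.prems \<open>q < l\<close> \<open>t ! Suc i \<in> D\<close> by simp
    next
      case False
      then have "diverges t q i"
        using i by (auto simp: diverges_def le_less)
      show ?thesis
      proof (cases "l \<le> i")
        case True
        then show ?thesis
          using black_lettersI[OF \<open>diverges t q i\<close>] \<open>q < l\<close> by simp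
      next
        case False
        then show ?thesis
          using less.hyps[of "Suc i"] less.prems i(1) \<open>t ! Suc i \<in> D\<close> by simp
      qed
    qed
  qed (use less.prems in simp)
qed

definition blacken ::
  "('a option \<Rightarrow> 'a option) \<Rightarrow> 'a option \<Rightarrow> 'a \<Rightarrow> ('a \<Rightarrow> color) \<Rightarrow> ('a \<Rightarrow> color) option" where
  "blacken n p a c =
     (if n p \<noteq> None \<and> n p \<noteq> Some a
      then map_option snd (while_option (\<lambda>(b, _). b \<noteq> Some p) (loop_body n) (loop_body n (Some p, c)))
      else Some c)"

lemma delta_eq_blacken:
  "delta (p, n, c) a =
     map_option (\<lambda>c1. (Some a, n(p := Some a), if c1 a = Black then (\<lambda>_. Black) else c1))
       (blacken n p a c)"
  by (simp add: delta_def blacken_def Let_def)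

lemma new_black_letters_empty:
  assumes "\<not> swappable t" "snd (pn_state t) (fst (pn_state t)) \<in> {None, Some a}"
  shows "new_black_letters t a = {}"
proof -
  have False if i: "Suc i < length t" "t ! i = last t" "t ! Suc i \<noteq> a" for i
  proof -
    obtain i' where i': "i \<le> i'" "Suc i' < length t" "t ! i' = t ! i"
      "snd (pn_state t) (Some (t ! i)) = Some (t ! Suc i')"
      using pn_state_succ_after[OF i(1)] by blast
    moreover have "t \<noteq> []"
      using i(1) by auto
    ultimately have "t ! Suc i' = a"
      using assms(2) i(2) by (simp add: fst_pn_state)
    then have "i < i'"
      using i(3) i'(1) le_neq_implies_less by blast
    then show False
      using not_swappable_same_exit[OF assms(1) \<open>i < i'\<close>] i i' \<open>t ! Suc i' = a\<close> by simp
  qed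
  then show ?thesis
    unfolding new_black_letters_def by blast
qed

lemma new_black_letters_cycle:
  assumes ip: "Suc ip < length t" "t ! ip = last t" "t ! Suc ip \<noteq> a"
    and positions: "\<And>d. d \<in> D \<Longrightarrow> \<exists>l. ip \<le> l \<and> l < length t \<and> t ! l = d"
    and closed: "\<And>d y. d \<in> D \<Longrightarrow> snd (pn_state t) (Some d) = Some y \<Longrightarrow> y \<in> D"
    and "last t \<in> D"
  shows "black_letters t \<union> new_black_letters t a = black_letters t \<union> D"
proof -
  have "D \<subseteq> new_black_letters t a"
  proof
    fix d assume "d \<in> D"
    then obtain l where "ip \<le> l" "l < length t" "t ! l = d"
      using positions by blast
    then show "d \<in> new_black_letters t a"
      using ip unfolding new_black_letters_def by (intro CollectI exI[of _ ip] exI[of _ l]) auto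
  qed
  moreover have "new_black_letters t a \<subseteq> black_letters t \<union> D"
  proof
    fix d assume "d \<in> new_black_letters t a"
    then obtain i l where "t ! i = last t" "i \<le> l" "l < length t" "d = t ! l"
      unfolding new_black_letters_def by blast
    then show "d \<in> black_letters t \<union> D"
      using closed_letters_absorb_suffix[where D = D and t = t and q = i and l = l, OF closed]
        \<open>last t \<in> D\<close> by simp
  qed
  ultimately show ?thesis
    by auto
qed

lemma blacken_along_cycle:
  assumes succ: "snd (pn_state t) (Some (last t)) = Some x" and "x \<noteq> a"
  obtains B where
    "blacken (snd (pn_state t)) (Some (last t)) a c = Some (\<lambda>d. if d \<in> B then Black else c d)"
    "black_letters t \<union> new_black_letters t a = black_letters t \<union> B"
proof -
  obtain ip where ip: "Suc ip < length t" "t ! ip = last t" "t ! Suc ip = x"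
    "\<And>j. ip < j \<Longrightarrow> Suc j < length t \<Longrightarrow> t ! j \<noteq> last t"
    using pn_state_succ_last_occurrence[OF succ] by blast
  have no_last: "\<And>j. Suc ip \<le> j \<Longrightarrow> Suc j < length t \<Longrightarrow> t ! j \<noteq> last t"
    using ip(4) by simp
  obtain S where S:
    "while_option (\<lambda>(b, _). b \<noteq> Some (Some (last t))) (loop_body (snd (pn_state t)))
        (Some (Some (t ! Suc ip)), c(last t := Black))
      = Some (Some (Some (last t)), \<lambda>d. if d \<in> S then Black else (c(last t := Black)) d)"
    "t ! Suc ip \<in> insert (last t) S"
    "\<forall>d\<in>insert (last t) S. \<exists>l. Suc ip \<le> l \<and> l < length t \<and> t ! l = d"
    "\<forall>d\<in>S. \<exists>y\<in>insert (last t) S. snd (pn_state t) (Some d) = Some y"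
    using loop_follows_successors[OF refl no_last ip(1), of "c(last t := Black)"] by blast
  define B where "B = insert (last t) S"
  show ?thesis
  proof (rule that[of B])
    have "loop_body (snd (pn_state t)) (Some (Some (last t)), c)
        = (Some (Some (t ! Suc ip)), c(last t := Black))"
      using succ ip(3) by (simp add: loop_body_def)
    moreover have "(\<lambda>d. if d \<in> S then Black else (c(last t := Black)) d)
        = (\<lambda>d. if d \<in> B then Black else c d)"
      by (auto simp: B_def)
    ultimately show "blacken (snd (pn_state t)) (Some (last t)) a c
        = Some (\<lambda>d. if d \<in> B then Black else c d)"
      using succ \<open>x \<noteq> a\<close> S(1) by (simp add: blacken_def)
    show "black_letters t \<union> new_black_letters t a = black_letters t \<union> B"
    proof (rule new_black_letters_cycle)
      show "\<exists>l. ip \<le> l \<and> l < length t \<and> t ! l = d" if "d \<in> B" for d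
        using that S(3) unfolding B_def by (meson Suc_leD)
      show "y \<in> B" if "d \<in> B" "snd (pn_state t) (Some d) = Some y" for d y
        using that succ ip(3) S(2,4) unfolding B_def by auto
    qed (use ip \<open>x \<noteq> a\<close> in \<open>simp_all add: B_def\<close>)
  qed
qed

lemma blacken_pn_state:
  obtains B where
    "blacken (snd (pn_state t)) (fst (pn_state t)) a c = Some (\<lambda>d. if d \<in> B then Black else c d)"
    "\<not> swappable t \<Longrightarrow> black_letters (t @ [a]) = black_letters t \<union> B"
proof (cases "snd (pn_state t) (fst (pn_state t)) \<in> {None, Some a}")
  case True
  show ?thesis
  proof (rule that[of "{}"])
    show "blacken (snd (pn_state t)) (fst (pn_state t)) a c = Some (\<lambda>d. if d \<in> {} then Black else c d)"
      using True by (auto simp: blacken_def)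
    show "black_letters (t @ [a]) = black_letters t \<union> {}" if "\<not> swappable t"
      using new_black_letters_empty[OF that True] by (simp add: black_letters_snoc)
  qed
next
  case False
  then obtain x where x: "snd (pn_state t) (fst (pn_state t)) = Some x" "x \<noteq> a"
    by auto
  then have "t \<noteq> []"
    by auto
  then have p: "fst (pn_state t) = Some (last t)"
    by (simp add: fst_pn_state)
  obtain B where "blacken (snd (pn_state t)) (Some (last t)) a c = Some (\<lambda>d. if d \<in> B then Black else c d)"
    "black_letters t \<union> new_black_letters t a = black_letters t \<union> B"
    using blacken_along_cycle[OF x(1)[unfolded p] x(2)] by blast
  then show ?thesis
    using p by (intro that[of B]) (simp_all add: black_letters_snoc)
qed

definition colouring :: "'a list \<Rightarrow> 'a \<Rightarrow> color" where
  "colouring t =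
     (if swappable t then (\<lambda>_. Black) else (\<lambda>d. if d \<in> black_letters t then Black else White))"

definition state_of :: "'a list \<Rightarrow> 'a dstate" where
  "state_of t = (fst (pn_state t), snd (pn_state t), colouring t)"

lemma delta_state_of: "delta (state_of t) a = Some (state_of (t @ [a]))"
proof -
  obtain B where B: "blacken (snd (pn_state t)) (fst (pn_state t)) a (colouring t)
      = Some (\<lambda>d. if d \<in> B then Black else colouring t d)"
    and black: "\<not> swappable t \<Longrightarrow> black_letters (t @ [a]) = black_letters t \<union> B"
    using blacken_pn_state[of t a "colouring t"] by blast
  define c1 where "c1 = (\<lambda>d. if d \<in> B then Black else colouring t d)"
  have "(if c1 a = Black then (\<lambda>_. Black) else c1) = colouring (t @ [a])"
  proof (cases "swappable t")
    case True
    then show ?thesis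
      using swappable_append[OF True, of "[a]"] by (simp add: c1_def colouring_def)
  next
    case False
    then have "c1 = (\<lambda>d. if d \<in> black_letters (t @ [a]) then Black else White)"
      using black by (auto simp: c1_def colouring_def)
    then show ?thesis
      using False by (simp add: colouring_def swappable_snoc)
  qed
  moreover have "blacken (snd (pn_state t)) (fst (pn_state t)) a (colouring t) = Some c1"
    using B by (simp add: c1_def)
  ultimately show ?thesis
    by (simp add: state_of_def delta_eq_blacken)
qed

lemma run_from_snoc: "run_from q (w @ [a]) = Option.bind (run_from q w) (\<lambda>q'. delta q' a)"
  by (induction w arbitrary: q) simp_all

lemma run_from_q0: "run_from q0 t = Some (state_of t)"
proof (induction t rule: rev_induct)
  case Nil
  show ?case
    by (simp add: q0_def state_of_def colouring_def fun_eq_iff)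
qed (simp add: run_from_snoc delta_state_of)

lemma final_state_of: "final (state_of t) \<longleftrightarrow> \<not> swappable t"
proof (cases "swappable t")
  case False
  have "\<exists>d. colouring t d = White"
  proof (cases "t = []")
    case True
    then show ?thesis
      by (simp add: colouring_def)
  next
    case False
    then show ?thesis
      using \<open>\<not> swappable t\<close> last_not_in_black_letters by (auto simp: colouring_def)
  qed
  then show ?thesis
    using False by (auto simp: final_def state_of_def)
qed (simp add: final_def state_of_def colouring_def)

theorem mainTheorem3:
  shows "(\<forall>w :: ('a :: finite) list. run_from q0 w \<noteq> None) \<and>
         {w :: 'a list. accepts w} = Leul"
proof
  show "\<forall>w :: 'a list. run_from q0 w \<noteq> None"
    by (simp add: run_from_q0)
  have "accepts w \<longleftrightarrow> w \<in> Leul" for w :: "'a list"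
    using run_from_q0[of w] final_state_of[of w] swappable_not_in_Leul not_swappable_in_Leul
    by (auto simp: accepts_def)
  then show "{w :: 'a list. accepts w} = Leul"
    by auto
qed

end
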